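(* Let $d\ge 3$ and let $\mathfrak M$ be a model of $\mathsf{SpecRel}_d$. Let $m,k\in\mathrm{IOb}$ and $e_1,e_2\in Ev_k$ with $k\in e_1\cap e_2$ and $\mathsf{dist}_m(e_1,e_2)\neq 0$. Then $\mathsf{time}_m(e_1,e_2)>\mathsf{time}_k(e_1,e_2)$.
   Context: Fix a natural number $d\ge 2$. Models are first-order structures $\mathfrak M=\langle U;\mathrm B,\mathrm{Ob},\mathrm{IOb},\mathrm{Ph},\mathrm Q,+,\cdot,\le,\mathrm W\rangle$, where $\mathrm B,\mathrm{Ob},\mathrm{IOb},\mathrm{Ph},\mathrm Q$ are unary relations (subsets of $U$: bodies, observers, inertial observers, photons, quantities), $+,\cdot$ are binary function symbols, $\le$ a binary relation symbol, and $\mathrm W$ a $(2+d)$-ary relation; $\mathrm W(m,b,\vec p)$ is read "observer $m$ coordinatizes body $b$ at coordinate point $\vec p\in\mathrm Q^d$". For $\vec p=\langle p_1,\dots,p_d\rangle\in\mathrm Q^d$ write $p_t:=p_1$ (time component), $\vec p_s:=\langle p_2,\dots,p_d\rangle$ (space component), $|\vec p|:=\sqrt{p_1^2+\dots+p_n^2}$ for $\vec p\in \mathrm Q^n$ (Euclidean length); $\mathrm Q^d$ carries its vector-space operations and $\vec o$ is the origin. Define $ev_m(\vec p):=\{b\in\mathrm B:\mathrm W(m,b,\vec p)\}$, $Cd_m:=\{\vec p\in\mathrm Q^d: ev_m(\vec p)\neq\emptyset\}$, $Ev_m:=\{ev_m(\vec p):\vec p\in Cd_m\}$, $Ev:=\bigcup_{m\in\mathrm{Ob}}Ev_m$.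 $Crd_m(e)$ denotes the unique $\vec p\in Cd_m$ with $ev_m(\vec p)=e$; any statement involving $Crd_m(e)$ (or the notions below built from it) tacitly asserts that such a unique $\vec p$ exists. $\mathsf{time}_m(e_1,e_2):=|Crd_m(e_1)_t-Crd_m(e_2)_t|$, $\mathsf{dist}_m(e_1,e_2):=|Crd_m(e_1)_s-Crd_m(e_2)_s|$, and $e_1\sim_m e_2$ (simultaneous for $m$) iff $Crd_m(e_1)_t=Crd_m(e_2)_t$. $\mathsf{SpecRel}_d$ consists of the axioms: AxFrame: $\mathrm{Ob}\cup\mathrm{Ph}\subseteq\mathrm B$, $\mathrm{IOb}\subseteq\mathrm{Ob}$, $U=\mathrm B\cup\mathrm Q$, $\mathrm B\cap\mathrm Q=\emptyset$, $\mathrm W\subseteq\mathrm{Ob}\times\mathrm B\times\mathrm Q^d$, $+,\cdot$ are binary operations on $\mathrm Q$ and $\le$ is a binary relation on $\mathrm Q$. AxEOF: $\langle\mathrm Q;+,\cdot,\le\rangle$ is a Euclidean ordered field (a linearly ordered field in which every positive element has a square root). AxSelf$^-$: $\forall m\in\mathrm{Ob}\ \forall\vec p\in Cd_m\ (m\in ev_m(\vec p)\iff \vec p_s=\vec o)$. AxPh$_0$: $\forall m\in\mathrm{IOb}\ \forall\vec p,\vec q\in\mathrm Q^d\ (|\vec p_s-\vec q_s|=|p_t-q_t|\iff \mathrm{Ph}\cap ev_m(\vec p)\cap ev_m(\vec q)\neq\emptyset)$. AxEv: $\forall m,k\in\mathrm{IOb}\ Ev_m=Ev_k$. AxSimDist: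 $\forall m,k\in\mathrm{IOb}\ \forall e_1,e_2\in Ev_m\ (e_1\sim_m e_2\wedge e_1\sim_k e_2\Rightarrow \mathsf{dist}_m(e_1,e_2)=\mathsf{dist}_k(e_1,e_2))$. *)

theory Defs
  imports Main
begin

text \<open>Two-sorted rendering of the models of SpecRel_d: bodies live in a type 'b
 (the set B of bodies is a parameter), quantities are the type 'q, which is a
 linearly ordered field (Euclidean property assumed separately).
 Coordinate points in Q^d are lists of quantities of length d; component 1
 (the time component) is the head, the space component is the tail.\<close>

definition euclidean_field :: "'q::linordered_field itself \<Rightarrow> bool" where
  "euclidean_field T \<longleftrightarrow> (\<forall>x::'q. 0 < x \<longrightarrow> (\<exists>y. y * y = x))"

definition qsqrt :: "'q::linordered_field \<Rightarrow> 'q" where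
  "qsqrt x = (THE y. 0 \<le> y \<and> y * y = x)"

definition vlen :: "'q::linordered_field list \<Rightarrow> 'q" where
  "vlen v = qsqrt (sum_list (map (\<lambda>x. x * x) v))"

definition vsub :: "'q::linordered_field list \<Rightarrow> 'q list \<Rightarrow> 'q list" where
  "vsub p q = map2 (-) p q"

definition tcomp :: "'q list \<Rightarrow> 'q" where
  "tcomp p = hd p"

definition scomp :: "'q list \<Rightarrow> 'q list" where
  "scomp p = tl p"

definition ev :: "'b set \<Rightarrow> ('b \<Rightarrow> 'b \<Rightarrow> 'q list \<Rightarrow> bool) \<Rightarrow> 'b \<Rightarrow> 'q list \<Rightarrow> 'b set" where
  "ev B W m p = {b \<in> B. W m b p}"

definition Cd :: "nat \<Rightarrow> 'b set \<Rightarrow> ('b \<Rightarrow> 'b \<Rightarrow> 'q list \<Rightarrow> bool) \<Rightarrow> 'b \<Rightarrow> 'q list set" where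
  "Cd d B W m = {p. length p = d \<and> ev B W m p \<noteq> {}}"

definition Evs :: "nat \<Rightarrow> 'b set \<Rightarrow> ('b \<Rightarrow> 'b \<Rightarrow> 'q list \<Rightarrow> bool) \<Rightarrow> 'b \<Rightarrow> 'b set set" where
  "Evs d B W m = {ev B W m p | p. p \<in> Cd d B W m}"

text \<open>Existence of a unique coordinate point (tacitly asserted whenever Crd is used).\<close>
definition has_crd :: "nat \<Rightarrow> 'b set \<Rightarrow> ('b \<Rightarrow> 'b \<Rightarrow> 'q list \<Rightarrow> bool) \<Rightarrow> 'b \<Rightarrow> 'b set \<Rightarrow> bool" where
  "has_crd d B W m e \<longleftrightarrow> (\<exists>!p. p \<in> Cd d B W m \<and> ev B W m p = e)"

definition Crd :: "nat \<Rightarrow> 'b set \<Rightarrow> ('b \<Rightarrow> 'b \<Rightarrow> 'q list \<Rightarrow> bool) \<Rightarrow> 'b \<Rightarrow> 'b set \<Rightarrow> 'q list" where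
  "Crd d B W m e = (THE p. p \<in> Cd d B W m \<and> ev B W m p = e)"

definition time_ob :: "nat \<Rightarrow> 'b set \<Rightarrow> ('b \<Rightarrow> 'b \<Rightarrow> 'q::linordered_field list \<Rightarrow> bool) \<Rightarrow> 'b \<Rightarrow> 'b set \<Rightarrow> 'b set \<Rightarrow> 'q" where
  "time_ob d B W m e1 e2 = \<bar>tcomp (Crd d B W m e1) - tcomp (Crd d B W m e2)\<bar>"

definition dist_ob :: "nat \<Rightarrow> 'b set \<Rightarrow> ('b \<Rightarrow> 'b \<Rightarrow> 'q::linordered_field list \<Rightarrow> bool) \<Rightarrow> 'b \<Rightarrow> 'b set \<Rightarrow> 'b set \<Rightarrow> 'q" where
  "dist_ob d B W m e1 e2 = vlen (vsub (scomp (Crd d B W m e1)) (scomp (Crd d B W m e2)))"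

definition sim_ob :: "nat \<Rightarrow> 'b set \<Rightarrow> ('b \<Rightarrow> 'b \<Rightarrow> 'q list \<Rightarrow> bool) \<Rightarrow> 'b \<Rightarrow> 'b set \<Rightarrow> 'b set \<Rightarrow> bool" where
  "sim_ob d B W m e1 e2 \<longleftrightarrow> has_crd d B W m e1 \<and> has_crd d B W m e2 \<and>
     tcomp (Crd d B W m e1) = tcomp (Crd d B W m e2)"

definition SpecRel :: "nat \<Rightarrow> 'b set \<Rightarrow> 'b set \<Rightarrow> 'b set \<Rightarrow> 'b set \<Rightarrow>
    ('b \<Rightarrow> 'b \<Rightarrow> 'q::linordered_field list \<Rightarrow> bool) \<Rightarrow> bool" where
  "SpecRel d B Ob IOb Ph W \<longleftrightarrow>
     \<comment> \<open>AxFrame\<close>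
     Ob \<union> Ph \<subseteq> B \<and> IOb \<subseteq> Ob \<and>
     (\<forall>m b p. W m b p \<longrightarrow> m \<in> Ob \<and> b \<in> B \<and> length p = d) \<and>
     \<comment> \<open>AxEOF\<close>
     euclidean_field TYPE('q) \<and>
     \<comment> \<open>AxSelf-\<close>
     (\<forall>m\<in>Ob. \<forall>p\<in>Cd d B W m. m \<in> ev B W m p \<longleftrightarrow> scomp p = replicate (d - 1) 0) \<and>
     \<comment> \<open>AxPh0\<close>
     (\<forall>m\<in>IOb. \<forall>p q. length p = d \<and> length q = d \<longrightarrow>
        (vlen (vsub (scomp p) (scomp q)) = \<bar>tcomp p - tcomp q\<bar> \<longleftrightarrow>
         Ph \<inter> ev B W m p \<inter> ev B W m q \<noteq> {})) \<and>
     \<comment> \<open>AxEv\<close>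
     (\<forall>m\<in>IOb. \<forall>k\<in>IOb. Evs d B W m = Evs d B W k) \<and>
     \<comment> \<open>AxSimDist\<close>
     (\<forall>m\<in>IOb. \<forall>k\<in>IOb. \<forall>e1\<in>Evs d B W m. \<forall>e2\<in>Evs d B W m.
        sim_ob d B W m e1 e2 \<and> sim_ob d B W k e1 e2 \<longrightarrow>
        dist_ob d B W m e1 e2 = dist_ob d B W k e1 e2)"

end

theory Submission
  imports Defs
begin

(* Let p1, p2 be the k-coordinates of the two events (same place, times 2h apart) and P, Q
   their m-coordinates.  The worldview transformation from k to m is a bijection of coordinate
   points preserving lightlike separation (AxPh0) and the spatial distance of pairs that are
   simultaneous for both observers (AxSimDist).  The points lightlike to both p1 and p2 form,
   for k, a sphere of radius |h| in the time slice halfway between them.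
   If P, Q were lightlike separated, so would be p1, p2.  If they were spacelike separated, the
   points lightlike to both P and Q would contain m-simultaneous pairs arbitrarily far apart,
   whose preimages lie on that sphere.  So P, Q are timelike separated, with time difference tau
   and squared spatial distance V > 0.  Take the m-simultaneous pair lightlike to P and Q that is
   antipodal in the middle slice: its squared distance is tau^2 - V, and since it spans two
   parallel light lines, its k-preimages are antipodal on the sphere, at distance 2|h|.  Hence
   (2h)^2 = tau^2 - V < tau^2. *)

lemma qsqrt_eq_iff:
  assumes "euclidean_field TYPE('q::linordered_field)" and "0 \<le> (x::'q)"
  shows "qsqrt x = y \<longleftrightarrow> 0 \<le> y \<and> y * y = x"
proof -
  obtain r where r: "0 \<le> r" "r * r = x"
  proof (cases "x = 0")
    case True
    then show ?thesis using that[of 0] by simp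
  next
    case False
    with assms have "0 < x" by simp
    with assms(1) obtain r where "r * r = x" unfolding euclidean_field_def by blast
    then show ?thesis using that[of "\<bar>r\<bar>"] by (simp add: abs_mult_self_eq)
  qed
  have unique: "\<exists>!y. 0 \<le> y \<and> y * y = x"
  proof (rule ex1I[of _ r])
    fix y assume "0 \<le> y \<and> y * y = x"
    with r show "y = r" by (metis power2_eq_iff_nonneg power2_eq_square)
  qed (use r in simp)
  show ?thesis
  proof
    assume "qsqrt x = y"
    then show "0 \<le> y \<and> y * y = x" using theI'[OF unique] by (simp add: qsqrt_def)
  qed (simp add: qsqrt_def the1_equality[OF unique])
qed

lemma qsqrt_mult_self:
  assumes "euclidean_field TYPE('q::linordered_field)" and "0 \<le> (x::'q)"
  shows "qsqrt x * qsqrt x = x"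
  using qsqrt_eq_iff[OF assms] by blast

lemma qsqrt_inj:
  assumes "euclidean_field TYPE('q::linordered_field)" and "0 \<le> x" "0 \<le> (y::'q)"
    and "qsqrt x = qsqrt y"
  shows "x = y"
  using assms qsqrt_eq_iff by metis

section \<open>Lightlike geometry of coordinate points\<close>

definition space_dist2 :: "nat \<Rightarrow> 'q::linordered_field list \<Rightarrow> 'q list \<Rightarrow> 'q" where
  "space_dist2 d p q = (\<Sum>i\<in>{1..<d}. (p!i - q!i)^2)"

definition lightlike :: "nat \<Rightarrow> 'q::linordered_field list \<Rightarrow> 'q list \<Rightarrow> bool" where
  "lightlike d p q \<longleftrightarrow> space_dist2 d p q = (p!0 - q!0)^2"

definition point :: "nat \<Rightarrow> (nat \<Rightarrow> 'q) \<Rightarrow> 'q list" where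
  "point d f = map f [0..<d]"

definition line_point :: "nat \<Rightarrow> 'q::linordered_field list \<Rightarrow> 'q list \<Rightarrow> 'q \<Rightarrow> 'q list" where
  "line_point d p q s = point d (\<lambda>i. p!i + s * (q!i - p!i))"

lemma nth_point [simp]: "i < d \<Longrightarrow> point d f ! i = f i"
  by (simp add: point_def)

lemma length_point [simp]: "length (point d f) = d"
  by (simp add: point_def)

lemma length_line_point [simp]: "length (line_point d p q s) = d"
  by (simp add: line_point_def)

lemma coords_eqI:
  assumes "length p = d" "length q = d" "p!0 = q!0" "\<forall>i\<in>{1..<d}. p!i = q!i"
  shows "p = q"
proof (rule nth_equalityI)
  fix i assume "i < length p"
  with assms show "p!i = q!i" by (cases i) auto
qed (use assms in simp)

lemma space_dist2_nonneg: "0 \<le> space_dist2 d p q"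
  by (simp add: space_dist2_def sum_nonneg)

lemma space_dist2_commute: "space_dist2 d p q = space_dist2 d q p"
  unfolding space_dist2_def by (simp add: power2_commute)

lemma space_dist2_eq_0_iff: "space_dist2 d p q = 0 \<longleftrightarrow> (\<forall>i\<in>{1..<d}. p!i = q!i)"
  unfolding space_dist2_def by (simp add: sum_nonneg_eq_0_iff)

lemma space_dist2_cong:
  "\<forall>i\<in>{1..<d}. q!i = q'!i \<Longrightarrow> space_dist2 d p q = space_dist2 d p q'"
  unfolding space_dist2_def by (rule sum.cong) auto

lemma vlen_vsub_scomp:
  assumes "length p = d" "length q = d" "0 < d"
  shows "vlen (vsub (scomp p) (scomp q)) = qsqrt (space_dist2 d p q)"
proof -
  have "sum_list (map (\<lambda>x. x * x) (vsub (scomp p) (scomp q)))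
      = (\<Sum>i = 0..<d - 1. (p!(Suc i) - q!(Suc i))^2)"
    using assms by (simp add: sum_list_sum_nth vsub_def scomp_def power2_eq_square nth_tl)
  also have "\<dots> = (\<Sum>i = Suc 0..<Suc (d - 1). (p!i - q!i)^2)"
    by (simp only: sum.shift_bounds_Suc_ivl)
  finally show ?thesis
    using assms by (simp add: vlen_def space_dist2_def)
qed

lemma tcomp_eq_nth0: "0 < length p \<Longrightarrow> tcomp p = p!0"
  by (simp add: tcomp_def hd_conv_nth)

lemma lightlike_commute: "lightlike d p q \<longleftrightarrow> lightlike d q p"
  unfolding lightlike_def by (simp add: space_dist2_commute power2_commute)

lemma lightlike_refl: "lightlike d p p"
  by (simp add: lightlike_def space_dist2_def)

lemma sum_square_lincomb:
  fixes a b :: "'i \<Rightarrow> 'a::comm_ring_1"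
  shows "(\<Sum>i\<in>A. (\<alpha> * a i + \<beta> * b i)^2)
    = \<alpha>^2 * (\<Sum>i\<in>A. (a i)^2) + 2 * \<alpha> * \<beta> * (\<Sum>i\<in>A. a i * b i) + \<beta>^2 * (\<Sum>i\<in>A. (b i)^2)"
  by (simp add: power2_sum power_mult_distrib sum.distrib sum_distrib_left algebra_simps)

lemma space_dist2_cosine_law:
  "space_dist2 d r1 r2
    = space_dist2 d r1 p + space_dist2 d r2 p - 2 * (\<Sum>i\<in>{1..<d}. (r1!i - p!i) * (r2!i - p!i))"
proof -
  have "space_dist2 d r1 r2 = (\<Sum>i\<in>{1..<d}. (1 * (r1!i - p!i) + (-1) * (r2!i - p!i))^2)"
    unfolding space_dist2_def by (rule sum.cong) (auto simp: algebra_simps)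
  then show ?thesis unfolding sum_square_lincomb space_dist2_def by simp
qed

lemma space_dist2_le_twice_sum:
  "space_dist2 d r1 r2 \<le> 2 * (space_dist2 d r1 p + space_dist2 d r2 p)"
proof -
  have "0 \<le> (\<Sum>i\<in>{1..<d}. (1 * (r1!i - p!i) + 1 * (r2!i - p!i))^2)"
    by (simp add: sum_nonneg)
  then show ?thesis unfolding sum_square_lincomb space_dist2_cosine_law[of d r1 r2 p]
    by (simp add: space_dist2_def)
qed

lemma lightlike_line_point:
  assumes "lightlike d p q" and "0 < d"
  shows "lightlike d (line_point d p q s) p" and "lightlike d (line_point d p q s) q"
proof -
  have pq: "space_dist2 d q p = (q!0 - p!0)^2"
    using assms(1) by (simp add: lightlike_def space_dist2_commute power2_commute)
  have "space_dist2 d (line_point d p q s) p = (\<Sum>i\<in>{1..<d}. s^2 * (q!i - p!i)^2)"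
    unfolding space_dist2_def line_point_def by (rule sum.cong) (auto simp: power_mult_distrib)
  also have "\<dots> = s^2 * space_dist2 d q p"
    by (simp add: space_dist2_def sum_distrib_left)
  finally show "lightlike d (line_point d p q s) p"
    using pq assms(2) by (simp add: lightlike_def line_point_def power_mult_distrib)
  have "space_dist2 d (line_point d p q s) q = (\<Sum>i\<in>{1..<d}. (s - 1)^2 * (q!i - p!i)^2)"
    unfolding space_dist2_def line_point_def
    by (rule sum.cong) (auto simp: power2_eq_square algebra_simps)
  also have "\<dots> = (s - 1)^2 * space_dist2 d q p"
    by (simp add: space_dist2_def sum_distrib_left)
  finally show "lightlike d (line_point d p q s) q"
    using pq assms(2) by (simp add: lightlike_def line_point_def power2_eq_square algebra_simps)
qed

lemma on_light_line_if_lightlike_to_ends: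
  assumes len: "length p = d" "length q = d" "length X = d" "0 < d"
    and pq: "lightlike d p q" "p \<noteq> q" and X: "lightlike d X p" "lightlike d X q"
  shows "\<exists>\<sigma>. X = line_point d p q \<sigma>"
proof -
  let ?I = "{1..<d}"
  define \<alpha> \<gamma> where "\<alpha> = q!0 - p!0" and "\<gamma> = X!0 - p!0"
  define \<beta> \<delta> where "\<beta> = (\<lambda>i. q!i - p!i)" and "\<delta> = (\<lambda>i. X!i - p!i)"
  have \<beta>\<beta>: "(\<Sum>i\<in>?I. (\<beta> i)^2) = \<alpha>^2"
    using pq(1) by (simp add: lightlike_def space_dist2_def \<beta>_def \<alpha>_def power2_commute)
  have \<delta>\<delta>: "(\<Sum>i\<in>?I. (\<delta> i)^2) = \<gamma>^2"
    using X(1) by (simp add: lightlike_def space_dist2_def \<delta>_def \<gamma>_def)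
  have "(\<Sum>i\<in>?I. (1 * \<delta> i + (-1) * \<beta> i)^2) = (\<gamma> - \<alpha>)^2"
    using X(2) by (simp add: lightlike_def space_dist2_def \<delta>_def \<gamma>_def \<beta>_def \<alpha>_def)
  then have \<delta>\<beta>: "(\<Sum>i\<in>?I. \<delta> i * \<beta> i) = \<gamma> * \<alpha>"
    unfolding sum_square_lincomb \<beta>\<beta> \<delta>\<delta> by (simp add: power2_diff)
  have "\<alpha> \<noteq> 0"
  proof
    assume "\<alpha> = 0"
    then have "space_dist2 d q p = 0"
      using \<beta>\<beta> by (simp add: space_dist2_def \<beta>_def)
    then have "q = p"
      using len \<open>\<alpha> = 0\<close> by (intro coords_eqI) (auto simp: space_dist2_eq_0_iff \<alpha>_def)
    with pq(2) show False by simp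
  qed
  define \<sigma> where "\<sigma> = \<gamma> / \<alpha>"
  have \<sigma>\<alpha>: "\<sigma> * \<alpha> = \<gamma>"
    using \<open>\<alpha> \<noteq> 0\<close> by (simp add: \<sigma>_def)
  have "(\<Sum>i\<in>?I. (1 * \<delta> i + (-\<sigma>) * \<beta> i)^2) = \<gamma>^2 - 2 * \<sigma> * (\<gamma> * \<alpha>) + \<sigma>^2 * \<alpha>^2"
    unfolding sum_square_lincomb \<beta>\<beta> \<delta>\<delta> \<delta>\<beta> by simp
  also have "\<dots> = 0"
    using \<sigma>\<alpha> by (simp add: power2_eq_square algebra_simps)
  finally have "\<forall>i\<in>?I. \<delta> i = \<sigma> * \<beta> i"
    by (simp add: sum_nonneg_eq_0_iff)
  then have "X = line_point d p q \<sigma>"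
    using len \<sigma>\<alpha> by (intro coords_eqI) (auto simp: line_point_def \<delta>_def \<beta>_def \<gamma>_def \<alpha>_def)
  then show ?thesis ..
qed

lemma lightlike_to_same_place_pair:
  assumes same: "\<forall>i\<in>{1..<d}. p1!i = p2!i" and gap: "p2!0 = p1!0 + 2 * h" "h \<noteq> 0"
    and r: "lightlike d r p1" "lightlike d r p2"
  shows "r!0 = p1!0 + h" and "space_dist2 d r p1 = h^2"
proof -
  have "space_dist2 d r p1 = space_dist2 d r p2"
    using same by (rule space_dist2_cong)
  then have "(r!0 - p1!0)^2 = (r!0 - p1!0 - 2 * h)^2"
    using r gap(1) by (simp add: lightlike_def algebra_simps)
  then have "4 * h * (r!0 - p1!0) = 4 * h * h"
    by algebra
  then show "r!0 = p1!0 + h"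
    using gap(2) by simp
  with r(1) show "space_dist2 d r p1 = h^2"
    by (simp add: lightlike_def)
qed

lemma exists_nonzero_orthogonal:
  fixes v :: "nat \<Rightarrow> 'q::linordered_field"
  assumes "3 \<le> d"
  shows "\<exists>u. (\<Sum>i\<in>{1..<d}. u i * v i) = 0 \<and> 0 < (\<Sum>i\<in>{1..<d}. (u i)^2)"
proof -
  let ?I = "{1..<d}"
  have I: "1 \<in> ?I" "2 \<in> ?I"
    using assms by auto
  show ?thesis
  proof (cases "v 1 = 0 \<and> v 2 = 0")
    case True
    define u where "u = (\<lambda>i::nat. if i = 1 then 1 else 0 :: 'q)"
    have "(\<Sum>i\<in>?I. u i * v i) = (\<Sum>i\<in>?I. if i = 1 then v 1 else 0)"
      by (rule sum.cong) (auto simp: u_def)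
    moreover have "(\<Sum>i\<in>?I. (u i)^2) = (\<Sum>i\<in>?I. if i = 1 then 1 else 0)"
      by (rule sum.cong) (auto simp: u_def)
    ultimately show ?thesis
      using True I by (intro exI[of _ u]) simp
  next
    case False
    define u where "u = (\<lambda>i::nat. if i = 1 then v 2 else if i = 2 then - v 1 else 0)"
    have "(\<Sum>i\<in>?I. u i * v i)
        = (\<Sum>i\<in>?I. (if i = 1 then v 2 * v 1 else 0) + (if i = 2 then - v 1 * v 2 else 0))"
      by (rule sum.cong) (auto simp: u_def)
    moreover have "(\<Sum>i\<in>?I. (u i)^2)
        = (\<Sum>i\<in>?I. (if i = 1 then (v 2)^2 else 0) + (if i = 2 then (v 1)^2 else 0))"
      by (rule sum.cong) (auto simp: u_def)
    moreover have "0 < (v 2)^2 + (v 1)^2"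
      using False by (auto simp: add_pos_nonneg add_nonneg_pos)
    ultimately show ?thesis
      using I by (intro exI[of _ u]) (simp add: sum.distrib)
  qed
qed

lemma exists_orthogonal_of_norm2:
  fixes v :: "nat \<Rightarrow> 'q::linordered_field"
  assumes "3 \<le> d" and "euclidean_field TYPE('q)" and "0 \<le> R"
  shows "\<exists>w. (\<Sum>i\<in>{1..<d}. w i * v i) = 0 \<and> (\<Sum>i\<in>{1..<d}. (w i)^2) = R"
proof -
  let ?I = "{1..<d}"
  obtain u where u: "(\<Sum>i\<in>?I. u i * v i) = 0" "0 < (\<Sum>i\<in>?I. (u i)^2)"
    using exists_nonzero_orthogonal[OF assms(1)] by blast
  define N where "N = (\<Sum>i\<in>?I. (u i)^2)"
  define \<mu> where "\<mu> = qsqrt (R / N)"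
  have "\<mu> * \<mu> = R / N"
    unfolding \<mu>_def using assms(2,3) u(2) by (simp add: N_def qsqrt_mult_self)
  moreover have "(\<Sum>i\<in>?I. (\<mu> * u i)^2) = (\<mu> * \<mu>) * N"
    unfolding N_def sum_distrib_left by (rule sum.cong) (simp_all add: power2_eq_square)
  ultimately have "(\<Sum>i\<in>?I. (\<mu> * u i)^2) = R"
    using u(2) by (simp add: N_def)
  moreover have "(\<Sum>i\<in>?I. \<mu> * u i * v i) = 0"
    using u(1) by (simp add: mult.assoc sum_distrib_left[symmetric])
  ultimately show ?thesis
    by (intro exI[of _ "\<lambda>i. \<mu> * u i"]) simp
qed

(* At time P!0 + t the points lightlike to both P and Q form a sphere of squared radius
   t^2 - c^2 / V centred at parameter c / V on the segment from P to Q. *)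
lemma lightlike_slice_point:
  fixes P Q :: "'q::linordered_field list"
  assumes "0 < d" and V: "V = space_dist2 d Q P" "V \<noteq> 0"
    and c: "2 * c = V - (Q!0 - P!0)^2 + 2 * t * (Q!0 - P!0)"
    and w: "(\<Sum>i\<in>{1..<d}. w i * (Q!i - P!i)) = 0" "(\<Sum>i\<in>{1..<d}. (w i)^2) = t^2 - c^2 / V"
  defines "y \<equiv> point d (\<lambda>i. if i = 0 then P!0 + t else P!i + c / V * (Q!i - P!i) + w i)"
  shows "lightlike d y P" and "lightlike d y Q"
proof -
  let ?I = "{1..<d}"
  define v where "v = (\<lambda>i. Q!i - P!i)"
  have vv: "(\<Sum>i\<in>?I. (v i)^2) = V" and vw: "(\<Sum>i\<in>?I. v i * w i) = 0"
    using V(1) w(1) by (simp_all add: space_dist2_def v_def mult.commute)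
  have "space_dist2 d y P = (\<Sum>i\<in>?I. (c / V * v i + 1 * w i)^2)"
    unfolding space_dist2_def by (rule sum.cong) (auto simp: y_def v_def)
  also have "\<dots> = t^2"
    unfolding sum_square_lincomb vv vw w(2) using V(2) by (simp add: power2_eq_square field_simps)
  finally show "lightlike d y P"
    using \<open>0 < d\<close> by (simp add: lightlike_def y_def)
  have "space_dist2 d y Q = (\<Sum>i\<in>?I. ((c / V - 1) * v i + 1 * w i)^2)"
    unfolding space_dist2_def by (rule sum.cong) (auto simp: y_def v_def algebra_simps)
  also have "\<dots> = t^2 - 2 * c + V"
    unfolding sum_square_lincomb vv vw w(2) using V(2) by (simp add: power2_eq_square field_simps)
  also have "\<dots> = (P!0 + t - Q!0)^2"
    using c by algebra
  finally show "lightlike d y Q"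
    using \<open>0 < d\<close> by (simp add: lightlike_def y_def)
qed

lemma light_cone_slice:
  fixes P Q :: "'q::linordered_field list"
  assumes "3 \<le> d" and "euclidean_field TYPE('q)"
    and V: "V = space_dist2 d Q P" "V \<noteq> 0"
    and c: "2 * c = V - (Q!0 - P!0)^2 + 2 * t * (Q!0 - P!0)"
    and R: "R = t^2 - c^2 / V" "0 \<le> R"
  shows "\<exists>y1 y2. length y1 = d \<and> length y2 = d \<and>
    lightlike d y1 P \<and> lightlike d y1 Q \<and> lightlike d y2 P \<and> lightlike d y2 Q \<and>
    y1!0 = P!0 + t \<and> y2!0 = P!0 + t \<and> space_dist2 d y1 y2 = 4 * R \<and>
    (\<forall>i\<in>{1..<d}. y1!i + y2!i = 2 * P!i + 2 * (c / V) * (Q!i - P!i))"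
proof -
  let ?I = "{1..<d}"
  have "0 < d"
    using assms(1) by simp
  obtain w where w: "(\<Sum>i\<in>?I. w i * (Q!i - P!i)) = 0" "(\<Sum>i\<in>?I. (w i)^2) = R"
    using exists_orthogonal_of_norm2[OF assms(1,2) R(2), of "\<lambda>i. Q!i - P!i"] by blast
  have w': "(\<Sum>i\<in>?I. - w i * (Q!i - P!i)) = 0" "(\<Sum>i\<in>?I. (- w i)^2) = R"
    using w by (simp_all add: sum_negf)
  define y1 where "y1 = point d (\<lambda>i. if i = 0 then P!0 + t else P!i + c / V * (Q!i - P!i) + w i)"
  define y2 where "y2 = point d (\<lambda>i. if i = 0 then P!0 + t else P!i + c / V * (Q!i - P!i) + - w i)"
  have "lightlike d y1 P" "lightlike d y1 Q"
    using lightlike_slice_point[OF \<open>0 < d\<close> V c w(1)] w(2) R(1) by (simp_all add: y1_def)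
  moreover have "lightlike d y2 P" "lightlike d y2 Q"
    using lightlike_slice_point[OF \<open>0 < d\<close> V c w'(1)] w'(2) R(1) by (simp_all add: y2_def)
  moreover have "space_dist2 d y1 y2 = 4 * R"
  proof -
    have "space_dist2 d y1 y2 = (\<Sum>i\<in>?I. 4 * (w i)^2)"
      unfolding space_dist2_def
      by (rule sum.cong) (auto simp: y1_def y2_def power2_eq_square algebra_simps)
    then show ?thesis
      using w(2) by (simp add: sum_distrib_left[symmetric])
  qed
  moreover have "\<forall>i\<in>?I. y1!i + y2!i = 2 * P!i + 2 * (c / V) * (Q!i - P!i)"
    by (auto simp: y1_def y2_def)
  ultimately show ?thesis
    using \<open>0 < d\<close> by (intro exI[of _ y1] exI[of _ y2]) (simp add: y1_def y2_def)
qed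

lemma spacelike_slice_radius_unbounded:
  fixes \<tau> V \<rho> :: "'q::linordered_field"
  assumes "\<tau>^2 < V" and "0 \<le> \<rho>"
  shows "\<exists>t c. 2 * c = V - \<tau>^2 + 2 * t * \<tau> \<and> \<rho> < t^2 - c^2 / V"
proof -
  have "0 < V - \<tau>^2" "0 < V"
    using assms(1) zero_le_power2[of \<tau>] by linarith+
  define D where "D = V - \<tau>^2"
  \<comment> \<open>4 V (t^2 - c^2 / V) = D ((2t - \<tau>)^2 - V), which is large for large u = 2t - \<tau>\<close>
  define u where "u = 1 + V + 4 * V * \<rho> / D"
  define t where "t = (u + \<tau>) / 2"
  define c where "c = (V - \<tau>^2 + 2 * t * \<tau>) / 2"
  have "D + 4 * V * \<rho> = D * (u - V)"
    using \<open>0 < V - \<tau>^2\<close> by (simp add: u_def D_def field_simps)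
  also have "\<dots> \<le> D * (u^2 - V)"
  proof -
    have "1 \<le> u"
      using \<open>0 < V\<close> \<open>0 < V - \<tau>^2\<close> assms(2) by (simp add: u_def D_def)
    then have "u \<le> u^2"
      using mult_right_mono[of 1 u u] by (simp add: power2_eq_square)
    then show ?thesis
      using \<open>0 < V - \<tau>^2\<close> by (simp add: D_def)
  qed
  also have "\<dots> = V * (2 * t)^2 - (2 * c)^2"
    unfolding D_def c_def t_def by (simp add: field_simps power2_eq_square)
  also have "\<dots> = 4 * V * (t^2 - c^2 / V)"
    using \<open>0 < V\<close> by (simp add: field_simps power2_eq_square)
  finally have "4 * V * \<rho> < 4 * V * (t^2 - c^2 / V)"
    using \<open>0 < V - \<tau>^2\<close> by (simp add: D_def)
  then have "\<rho> < t^2 - c^2 / V"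
    using \<open>0 < V\<close> by simp
  then show ?thesis
    by (intro exI[of _ t] exI[of _ c]) (simp add: c_def)
qed

lemma timelike_middle_slice:
  fixes P Q :: "'q::linordered_field list"
  assumes "3 \<le> d" and "euclidean_field TYPE('q)"
    and "0 < space_dist2 d Q P" and "space_dist2 d Q P < (Q!0 - P!0)^2"
  shows "\<exists>y1 y2. length y1 = d \<and> length y2 = d \<and>
    lightlike d y1 P \<and> lightlike d y1 Q \<and> lightlike d y2 P \<and> lightlike d y2 Q \<and>
    y1!0 = y2!0 \<and> (\<forall>i<d. y1!i + y2!i = P!i + Q!i) \<and>
    space_dist2 d y1 y2 = (Q!0 - P!0)^2 - space_dist2 d Q P"
proof -
  define V \<tau> where "V = space_dist2 d Q P" and "\<tau> = Q!0 - P!0"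
  define R where "R = (\<tau>^2 - V) / 4"
  have "V \<noteq> 0"
    using assms(3) by (simp add: V_def)
  moreover have "2 * (V / 2) = V - (Q!0 - P!0)^2 + 2 * (\<tau> / 2) * (Q!0 - P!0)"
    by (simp add: \<tau>_def power2_eq_square)
  moreover have "R = (\<tau> / 2)^2 - (V / 2)^2 / V" "0 \<le> R"
    using assms(3,4) by (simp_all add: R_def V_def \<tau>_def power2_eq_square field_simps)
  ultimately obtain y1 y2 where y: "length y1 = d" "length y2 = d"
    "lightlike d y1 P" "lightlike d y1 Q" "lightlike d y2 P" "lightlike d y2 Q"
    "y1!0 = P!0 + \<tau> / 2" "y2!0 = P!0 + \<tau> / 2" "space_dist2 d y1 y2 = 4 * R"
    "\<forall>i\<in>{1..<d}. y1!i + y2!i = 2 * P!i + 2 * (V / 2 / V) * (Q!i - P!i)"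
    using light_cone_slice[OF assms(1,2) V_def] by blast
  have "\<forall>i<d. y1!i + y2!i = P!i + Q!i"
  proof (intro allI impI)
    fix i assume "i < d"
    then show "y1!i + y2!i = P!i + Q!i"
      using y(7,8,10) assms(3) by (cases "i = 0") (auto simp: \<tau>_def V_def)
  qed
  with y show ?thesis
    by (intro exI[of _ y1] exI[of _ y2]) (simp add: R_def V_def \<tau>_def)
qed

lemma lightlike_parallel_light_lines:
  assumes "0 < d" and sum: "\<forall>i<d. y1!i + y2!i = P!i + Q!i" and "lightlike d P y1"
  shows "lightlike d (line_point d P y2 \<sigma>) (line_point d y1 Q \<sigma>)"
proof -
  have diff: "line_point d P y2 \<sigma> ! i - line_point d y1 Q \<sigma> ! i = P!i - y1!i" if "i < d" for i
  proof -
    have "line_point d P y2 \<sigma> ! i - line_point d y1 Q \<sigma> ! i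
        = P!i - y1!i + \<sigma> * (y1!i + y2!i - P!i - Q!i)"
      using that by (simp add: line_point_def algebra_simps)
    with sum that show ?thesis
      by simp
  qed
  then have "space_dist2 d (line_point d P y2 \<sigma>) (line_point d y1 Q \<sigma>) = space_dist2 d P y1"
    unfolding space_dist2_def by (intro sum.cong) auto
  with diff[OF \<open>0 < d\<close>] \<open>lightlike d P y1\<close> show ?thesis
    by (simp add: lightlike_def)
qed

lemma lightlike_sphere_light_lines_iff:
  assumes "0 < d"
    and same: "\<forall>i\<in>{1..<d}. p1!i = p2!i" and gap: "p2!0 = p1!0 + 2 * h"
    and r: "r1!0 = p1!0 + h" "r2!0 = p1!0 + h"
      "space_dist2 d r1 p1 = h^2" "space_dist2 d r2 p1 = h^2"
  defines "ab \<equiv> (\<Sum>i\<in>{1..<d}. (r1!i - p1!i) * (r2!i - p1!i))"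
  shows "lightlike d (line_point d p1 r2 s) (line_point d r1 p2 s') \<longleftrightarrow>
    s' * (s * (h^2 + ab) - 2 * h^2) + s * (h^2 - ab) = 0"
proof -
  let ?I = "{1..<d}"
  define a b where "a = (\<lambda>i. r1!i - p1!i)" and "b = (\<lambda>i. r2!i - p1!i)"
  have aa: "(\<Sum>i\<in>?I. (a i)^2) = h^2" and bb: "(\<Sum>i\<in>?I. (b i)^2) = h^2"
    using r(3,4) by (simp_all add: a_def b_def space_dist2_def)
  have "space_dist2 d (line_point d p1 r2 s) (line_point d r1 p2 s')
      = (\<Sum>i\<in>?I. (s * b i + (s' - 1) * a i)^2)"
    unfolding space_dist2_def
    by (rule sum.cong) (use same in \<open>auto simp: line_point_def a_def b_def algebra_simps\<close>)
  also have "\<dots> = s^2 * h^2 + 2 * s * (s' - 1) * ab + (s' - 1)^2 * h^2"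
  proof -
    have "(\<Sum>i\<in>?I. b i * a i) = ab"
      unfolding ab_def a_def b_def by (simp add: mult.commute)
    then show ?thesis
      unfolding sum_square_lincomb aa bb by simp
  qed
  finally have dist: "space_dist2 d (line_point d p1 r2 s) (line_point d r1 p2 s')
      = s^2 * h^2 + 2 * s * (s' - 1) * ab + (s' - 1)^2 * h^2" .
  have time: "line_point d p1 r2 s ! 0 - line_point d r1 p2 s' ! 0 = s * h - h - s' * h"
    using \<open>0 < d\<close> gap r(1,2) by (simp add: line_point_def algebra_simps)
  have diff: "s^2 * h^2 + 2 * s * (s' - 1) * ab + (s' - 1)^2 * h^2 - (s * h - h - s' * h)^2
      = 2 * (s' * (s * (h^2 + ab) - 2 * h^2) + s * (h^2 - ab))"
    by (simp add: power2_eq_square algebra_simps)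
  have "lightlike d (line_point d p1 r2 s) (line_point d r1 p2 s') \<longleftrightarrow>
      s^2 * h^2 + 2 * s * (s' - 1) * ab + (s' - 1)^2 * h^2 - (s * h - h - s' * h)^2 = 0"
    unfolding lightlike_def dist time by (rule eq_iff_diff_eq_0)
  then show ?thesis
    unfolding diff mult_eq_0_iff by simp
qed

lemma space_dist2_antipodal_if_light_lines_lightlike:
  assumes "0 < d"
    and same: "\<forall>i\<in>{1..<d}. p1!i = p2!i" and gap: "p2!0 = p1!0 + 2 * h" "h \<noteq> 0"
    and r: "length r1 = d" "length r2 = d" "r1 \<noteq> r2" "r1!0 = p1!0 + h" "r2!0 = p1!0 + h"
      "space_dist2 d r1 p1 = h^2" "space_dist2 d r2 p1 = h^2"
    and lines: "\<And>s. \<exists>s'. lightlike d (line_point d p1 r2 s) (line_point d r1 p2 s')"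
  shows "space_dist2 d r1 r2 = 4 * h^2"
proof -
  define ab where "ab = (\<Sum>i\<in>{1..<d}. (r1!i - p1!i) * (r2!i - p1!i))"
  have "h^2 + ab = 0"
  proof (rule ccontr)
    assume "h^2 + ab \<noteq> 0"
    \<comment> \<open>for this s the lightlike condition no longer depends on s'\<close>
    define s where "s = 2 * h^2 / (h^2 + ab)"
    have s: "s * (h^2 + ab) = 2 * h^2"
      using \<open>h^2 + ab \<noteq> 0\<close> by (simp add: s_def)
    obtain s' where "lightlike d (line_point d p1 r2 s) (line_point d r1 p2 s')"
      using lines by blast
    then have "s * (h^2 - ab) = 0"
      using lightlike_sphere_light_lines_iff[OF \<open>0 < d\<close> same gap(1) r(4-7)] s
      by (simp add: ab_def)
    moreover have "s \<noteq> 0"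
      using s gap(2) by auto
    ultimately have "space_dist2 d r1 r2 = 0"
      using space_dist2_cosine_law[of d r1 r2 p1] r(6,7) by (simp add: ab_def)
    then have "r1 = r2"
      using r by (intro coords_eqI) (auto simp: space_dist2_eq_0_iff)
    with r(3) show False ..
  qed
  then show ?thesis
    using space_dist2_cosine_law[of d r1 r2 p1] r(6,7) by (simp add: ab_def)
qed

section \<open>Worldview transformations\<close>

locale worldview =
  fixes d :: nat and wv :: "'q::linordered_field list \<Rightarrow> 'q list \<Rightarrow> bool"
  assumes dim: "3 \<le> d" and euclidean: "euclidean_field TYPE('q)"
    and wv_length: "wv p p' \<Longrightarrow> length p = d \<and> length p' = d"
    and wv_total: "length p = d \<Longrightarrow> \<exists>p'. wv p p'"
    and wv_surj: "length p' = d \<Longrightarrow> \<exists>p. wv p p'"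
    and wv_unique: "wv p p' \<Longrightarrow> wv p q' \<Longrightarrow> p' = q'"
    and wv_lightlike: "wv p p' \<Longrightarrow> wv q q' \<Longrightarrow> lightlike d p q \<longleftrightarrow> lightlike d p' q'"
    and wv_simultaneous: "wv p p' \<Longrightarrow> wv q q' \<Longrightarrow> p!0 = q!0 \<Longrightarrow> p'!0 = q'!0 \<Longrightarrow>
      space_dist2 d p q = space_dist2 d p' q'"
begin

lemma dim_pos: "0 < d"
  using dim by simp

lemma image_on_light_line:
  assumes "wv p P" "wv q Q" "lightlike d p q" "P \<noteq> Q" "wv (line_point d p q s) X"
  shows "\<exists>\<sigma>. X = line_point d P Q \<sigma>"
proof (rule on_light_line_if_lightlike_to_ends)
  show "lightlike d P Q"
    using assms(1-3) wv_lightlike by blast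
  show "lightlike d X P" "lightlike d X Q"
    using lightlike_line_point[OF assms(3) dim_pos] wv_lightlike[OF assms(5)] assms(1,2) by blast+
qed (use assms wv_length dim_pos in auto)

lemma preimage_on_light_line:
  assumes "wv p P" "wv q Q" "lightlike d P Q" "p \<noteq> q" "wv x (line_point d P Q \<sigma>)"
  shows "\<exists>s. x = line_point d p q s"
proof (rule on_light_line_if_lightlike_to_ends)
  show "lightlike d p q"
    using assms(1-3) wv_lightlike by blast
  show "lightlike d x p" "lightlike d x q"
    using lightlike_line_point[OF assms(3) dim_pos] wv_lightlike[OF assms(5)] assms(1,2) by blast+
qed (use assms wv_length dim_pos in auto)

end

locale same_place_events = worldview +
  fixes p1 p2 P Q :: "'q::linordered_field list"
  assumes wv1: "wv p1 P" and wv2: "wv p2 Q"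
    and same_place: "\<forall>i\<in>{1..<d}. p1!i = p2!i"
    and images_apart: "space_dist2 d P Q \<noteq> 0"
begin

definition h where "h = (p2!0 - p1!0) / 2"

lemma p2_time: "p2!0 = p1!0 + 2 * h"
  by (simp add: h_def field_simps)

lemma h_nonzero: "h \<noteq> 0"
proof
  assume "h = 0"
  then have "p1 = p2"
    using wv1 wv2 wv_length same_place by (intro coords_eqI) (auto simp: h_def)
  then have "P = Q"
    using wv1 wv2 wv_unique by blast
  with images_apart show False
    by (simp add: space_dist2_def)
qed

lemma preimage_on_sphere:
  assumes "lightlike d y P" "lightlike d y Q" "wv r y"
  shows "r!0 = p1!0 + h" and "space_dist2 d r p1 = h^2"
  using lightlike_to_same_place_pair[OF same_place p2_time h_nonzero]
    wv_lightlike[OF assms(3) wv1] wv_lightlike[OF assms(3) wv2] assms(1,2) by auto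

lemma images_not_lightlike: "\<not> lightlike d P Q"
proof
  assume "lightlike d P Q"
  then have "lightlike d p1 p2"
    using wv_lightlike[OF wv1 wv2] by simp
  moreover have "space_dist2 d p1 p2 = 0"
    using same_place by (simp add: space_dist2_eq_0_iff)
  ultimately show False
    using p2_time h_nonzero by (simp add: lightlike_def)
qed

lemma images_not_spacelike: "\<not> (Q!0 - P!0)^2 < space_dist2 d Q P"
proof
  define V \<tau> where "V = space_dist2 d Q P" and "\<tau> = Q!0 - P!0"
  assume "(Q!0 - P!0)^2 < space_dist2 d Q P"
  then have "\<tau>^2 < V"
    by (simp add: V_def \<tau>_def)
  then obtain t c where c: "2 * c = V - (Q!0 - P!0)^2 + 2 * t * (Q!0 - P!0)"
    and wide: "h^2 < t^2 - c^2 / V"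
    using spacelike_slice_radius_unbounded[of \<tau> V "h^2"] by (auto simp: \<tau>_def)
  define R where "R = t^2 - c^2 / V"
  have "V \<noteq> 0"
    using \<open>\<tau>^2 < V\<close> zero_le_power2[of \<tau>] by linarith
  moreover have "0 \<le> R"
    using wide zero_le_power2[of h] unfolding R_def by linarith
  ultimately obtain y1 y2 where y: "length y1 = d" "length y2 = d"
    "lightlike d y1 P" "lightlike d y1 Q" "lightlike d y2 P" "lightlike d y2 Q"
    "y1!0 = P!0 + t" "y2!0 = P!0 + t" "space_dist2 d y1 y2 = 4 * R"
    using light_cone_slice[OF dim euclidean V_def _ c R_def] by meson
  obtain r1 r2 where r: "wv r1 y1" "wv r2 y2"
    using wv_surj[OF y(1)] wv_surj[OF y(2)] by blast
  have "space_dist2 d r1 r2 = 4 * R"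
    using wv_simultaneous[OF r] y preimage_on_sphere(1) r by simp
  moreover have "space_dist2 d r1 r2 \<le> 4 * h^2"
    using space_dist2_le_twice_sum[of d r1 r2 p1] preimage_on_sphere(2) y r by simp
  ultimately show False
    using wide by (simp add: R_def)
qed

lemma light_line_points_have_lightlike_partner:
  assumes y: "lightlike d y1 P" "lightlike d y1 Q" "lightlike d y2 P" "lightlike d y2 Q"
    and sum: "\<forall>i<d. y1!i + y2!i = P!i + Q!i"
    and r: "wv r1 y1" "wv r2 y2"
  shows "\<exists>s'. lightlike d (line_point d p1 r2 s) (line_point d r1 p2 s')"
proof -
  obtain X where X: "wv (line_point d p1 r2 s) X"
    using wv_total[of "line_point d p1 r2 s"] by auto
  have "lightlike d p1 r2"
    using wv_lightlike[OF wv1 r(2)] y(3) lightlike_commute by blast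
  moreover have "P \<noteq> y2"
    using y(4) images_not_lightlike by blast
  ultimately obtain \<sigma> where \<sigma>: "X = line_point d P y2 \<sigma>"
    using image_on_light_line[OF wv1 r(2) _ _ X] by blast
  obtain z where z: "wv z (line_point d y1 Q \<sigma>)"
    using wv_surj[of "line_point d y1 Q \<sigma>"] by auto
  have "r1 \<noteq> p2"
    using preimage_on_sphere(1)[OF y(1,2) r(1)] p2_time h_nonzero by auto
  then obtain s' where "z = line_point d r1 p2 s'"
    using preimage_on_light_line[OF r(1) wv2 y(2) _ z] by blast
  moreover have "lightlike d X (line_point d y1 Q \<sigma>)"
    using lightlike_parallel_light_lines[OF dim_pos sum] y(1) \<sigma> lightlike_commute by blast
  ultimately show ?thesis
    using wv_lightlike[OF X z] by blast
qed

lemma images_timelike_gap: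
  assumes "space_dist2 d Q P < (Q!0 - P!0)^2"
  shows "4 * h^2 = (Q!0 - P!0)^2 - space_dist2 d Q P"
proof -
  have "0 < space_dist2 d Q P"
    using images_apart space_dist2_nonneg[of d Q P] by (simp add: space_dist2_commute)
  then obtain y1 y2 where y: "length y1 = d" "length y2 = d"
    "lightlike d y1 P" "lightlike d y1 Q" "lightlike d y2 P" "lightlike d y2 Q"
    "y1!0 = y2!0" "\<forall>i<d. y1!i + y2!i = P!i + Q!i"
    "space_dist2 d y1 y2 = (Q!0 - P!0)^2 - space_dist2 d Q P"
    using timelike_middle_slice[OF dim euclidean _ assms] by blast
  obtain r1 r2 where r: "wv r1 y1" "wv r2 y2"
    using wv_surj[OF y(1)] wv_surj[OF y(2)] by blast
  have "r1 \<noteq> r2"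
  proof
    assume "r1 = r2"
    then have "y1 = y2"
      using r wv_unique by blast
    with y(9) assms show False
      by (simp add: space_dist2_def)
  qed
  have "space_dist2 d r1 r2 = 4 * h^2"
    using space_dist2_antipodal_if_light_lines_lightlike[OF dim_pos same_place p2_time h_nonzero]
      light_line_points_have_lightlike_partner[OF y(3-6,8) r] \<open>r1 \<noteq> r2\<close>
      preimage_on_sphere[OF y(3,4) r(1)] preimage_on_sphere[OF y(5,6) r(2)] wv_length r
    by blast
  moreover have "space_dist2 d r1 r2 = space_dist2 d y1 y2"
    using wv_simultaneous[OF r] preimage_on_sphere(1) y r by simp
  ultimately show ?thesis
    using y(9) by simp
qed

theorem time_dilation: "(p2!0 - p1!0)^2 < (Q!0 - P!0)^2"
proof -
  have "space_dist2 d Q P \<noteq> (Q!0 - P!0)^2"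
    using images_not_lightlike by (simp add: lightlike_def space_dist2_commute power2_commute)
  then have "space_dist2 d Q P < (Q!0 - P!0)^2"
    using images_not_spacelike by simp
  moreover have "0 < space_dist2 d Q P"
    using images_apart space_dist2_nonneg[of d Q P] by (simp add: space_dist2_commute)
  moreover have "(p2!0 - p1!0)^2 = 4 * h^2"
    using p2_time by (simp add: power2_eq_square)
  ultimately show ?thesis
    using images_timelike_gap by simp
qed

end

section \<open>Models of SpecRel\<close>

locale specrel_model =
  fixes d :: nat and B Ob IOb Ph :: "'b set"
    and W :: "'b \<Rightarrow> 'b \<Rightarrow> 'q::linordered_field list \<Rightarrow> bool"
  assumes SpecRel: "SpecRel d B Ob IOb Ph W" and dim_pos: "0 < d"
begin

lemma euclidean: "euclidean_field TYPE('q)"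
  and IOb_Ob: "IOb \<subseteq> Ob"
  and AxSelf: "m \<in> Ob \<Longrightarrow> p \<in> Cd d B W m \<Longrightarrow> m \<in> ev B W m p \<longleftrightarrow> scomp p = replicate (d - 1) 0"
  and AxPh: "m \<in> IOb \<Longrightarrow> length p = d \<Longrightarrow> length q = d \<Longrightarrow>
    vlen (vsub (scomp p) (scomp q)) = \<bar>tcomp p - tcomp q\<bar> \<longleftrightarrow> Ph \<inter> ev B W m p \<inter> ev B W m q \<noteq> {}"
  and AxEv: "m \<in> IOb \<Longrightarrow> k \<in> IOb \<Longrightarrow> Evs d B W m = Evs d B W k"
  and AxSimDist: "m \<in> IOb \<Longrightarrow> k \<in> IOb \<Longrightarrow> e1 \<in> Evs d B W m \<Longrightarrow> e2 \<in> Evs d B W m \<Longrightarrow>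
    sim_ob d B W m e1 e2 \<Longrightarrow> sim_ob d B W k e1 e2 \<Longrightarrow>
    dist_ob d B W m e1 e2 = dist_ob d B W k e1 e2"
  using SpecRel unfolding SpecRel_def by blast+

lemma lightlike_iff_photon:
  assumes "m \<in> IOb" "length p = d" "length q = d"
  shows "lightlike d p q \<longleftrightarrow> Ph \<inter> ev B W m p \<inter> ev B W m q \<noteq> {}"
proof -
  have "p \<noteq> []" "q \<noteq> []"
    using assms(2,3) dim_pos by auto
  then have "vlen (vsub (scomp p) (scomp q)) = \<bar>tcomp p - tcomp q\<bar> \<longleftrightarrow> lightlike d p q"
    using assms(2,3) dim_pos
    by (auto simp: vlen_vsub_scomp qsqrt_eq_iff[OF euclidean space_dist2_nonneg] lightlike_def
        tcomp_eq_nth0 power2_eq_square)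
  with AxPh[OF assms] show ?thesis
    by blast
qed

lemma ev_nonempty: "m \<in> IOb \<Longrightarrow> length p = d \<Longrightarrow> ev B W m p \<noteq> {}"
  using lightlike_iff_photon[of m p p] lightlike_refl by blast

lemma ev_inj:
  assumes m: "m \<in> IOb" and len: "length p = d" "length q = d"
    and ev: "ev B W m p = ev B W m q"
  shows "p = q"
proof -
  have pq: "lightlike d p q"
    using lightlike_iff_photon[OF m len] lightlike_iff_photon[OF m len(1) len(1)] ev
    by (simp add: lightlike_refl)
  \<comment> \<open>the mirror image of q in p's position: lightlike to p, but lightlike to q only if p = q\<close>
  define r where "r = point d (\<lambda>i. if i = 0 then q!0 else 2 * p!i - q!i)"
  have "space_dist2 d r p = space_dist2 d p q"
    unfolding space_dist2_def r_def by (rule sum.cong) (auto simp: power2_commute algebra_simps)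
  then have "lightlike d r p"
    using pq dim_pos by (simp add: lightlike_def r_def power2_commute)
  then have "lightlike d r q"
    using lightlike_iff_photon[OF m _ len(1), of r] lightlike_iff_photon[OF m _ len(2), of r] ev
    by (simp add: r_def)
  moreover have "space_dist2 d r q = 4 * space_dist2 d p q"
    unfolding space_dist2_def r_def sum_distrib_left
    by (rule sum.cong) (auto simp: power2_eq_square algebra_simps)
  ultimately have "space_dist2 d p q = 0"
    using dim_pos by (simp add: lightlike_def r_def)
  with pq len show "p = q"
    by (intro coords_eqI) (auto simp: lightlike_def space_dist2_eq_0_iff)
qed

lemma Cd_iff: "m \<in> IOb \<Longrightarrow> p \<in> Cd d B W m \<longleftrightarrow> length p = d"
  using ev_nonempty by (auto simp: Cd_def)

lemma Evs_iff: "m \<in> IOb \<Longrightarrow> e \<in> Evs d B W m \<longleftrightarrow> (\<exists>p. length p = d \<and> e = ev B W m p)"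
  by (auto simp: Evs_def Cd_iff)

lemma has_crd_ev:
  assumes "m \<in> IOb" "length p = d"
  shows "has_crd d B W m (ev B W m p)" and "Crd d B W m (ev B W m p) = p"
proof -
  have "\<exists>!p'. p' \<in> Cd d B W m \<and> ev B W m p' = ev B W m p"
    using assms ev_inj[OF assms(1)] by (auto simp: Cd_iff)
  then show "has_crd d B W m (ev B W m p)" and "Crd d B W m (ev B W m p) = p"
    using assms by (auto simp: has_crd_def Crd_def Cd_iff intro: the1_equality)
qed

lemma time_ob_ev:
  assumes "m \<in> IOb" "length p = d" "length q = d"
  shows "time_ob d B W m (ev B W m p) (ev B W m q) = \<bar>p!0 - q!0\<bar>"
  using assms dim_pos by (auto simp: time_ob_def has_crd_ev tcomp_eq_nth0)

lemma dist_ob_ev: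
  assumes "m \<in> IOb" "length p = d" "length q = d"
  shows "dist_ob d B W m (ev B W m p) (ev B W m q) = qsqrt (space_dist2 d p q)"
  using assms dim_pos by (simp add: dist_ob_def has_crd_ev vlen_vsub_scomp)

lemma sim_ob_ev_iff:
  assumes "m \<in> IOb" "length p = d" "length q = d"
  shows "sim_ob d B W m (ev B W m p) (ev B W m q) \<longleftrightarrow> p!0 = q!0"
  using assms dim_pos by (auto simp: sim_ob_def has_crd_ev tcomp_eq_nth0)

lemma worldline_space_zero:
  assumes "k \<in> IOb" "length p = d" "k \<in> ev B W k p"
  shows "\<forall>i\<in>{1..<d}. p!i = 0"
proof
  fix i assume i: "i \<in> {1..<d}"
  have "tl p = replicate (d - 1) 0"
    using AxSelf[of k p] IOb_Ob assms Cd_iff[of k p] by (auto simp: scomp_def)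
  then have "tl p ! (i - 1) = 0"
    using i by auto
  with i assms(2) show "p!i = 0"
    by (cases i) (auto simp: nth_tl)
qed

definition worldview_rel :: "'b \<Rightarrow> 'b \<Rightarrow> 'q list \<Rightarrow> 'q list \<Rightarrow> bool" where
  "worldview_rel k m p p' \<longleftrightarrow> length p = d \<and> length p' = d \<and> ev B W k p = ev B W m p'"

lemma worldview_rel_simultaneous:
  assumes k: "k \<in> IOb" and m: "m \<in> IOb"
    and wv: "worldview_rel k m p p'" "worldview_rel k m q q'" and "p!0 = q!0" "p'!0 = q'!0"
  shows "space_dist2 d p q = space_dist2 d p' q'"
proof -
  have len: "length p = d" "length p' = d" "length q = d" "length q' = d"
    and ev: "ev B W k p = ev B W m p'" "ev B W k q = ev B W m q'"
    using wv by (auto simp: worldview_rel_def)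
  have "sim_ob d B W m (ev B W k p) (ev B W k q)" "sim_ob d B W k (ev B W k p) (ev B W k q)"
    using sim_ob_ev_iff[OF m len(2,4)] sim_ob_ev_iff[OF k len(1,3)] assms(5,6) ev by simp_all
  moreover have "ev B W k p \<in> Evs d B W m" "ev B W k q \<in> Evs d B W m"
    using ev len Evs_iff[OF m] by auto
  ultimately have "dist_ob d B W m (ev B W k p) (ev B W k q) = dist_ob d B W k (ev B W k p) (ev B W k q)"
    using AxSimDist[OF m k] by blast
  then have "qsqrt (space_dist2 d p' q') = qsqrt (space_dist2 d p q)"
    using dist_ob_ev[OF m len(2,4)] dist_ob_ev[OF k len(1,3)] ev by simp
  then show ?thesis
    using qsqrt_inj[OF euclidean space_dist2_nonneg space_dist2_nonneg] by metis
qed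

lemma worldview_worldview_rel:
  assumes "3 \<le> d" and k: "k \<in> IOb" and m: "m \<in> IOb"
  shows "worldview d (worldview_rel k m)"
proof
  show "\<exists>p'. worldview_rel k m p p'" if "length p = d" for p
  proof -
    have "ev B W k p \<in> Evs d B W m"
      using AxEv[OF k m] Evs_iff[OF k] that by blast
    with that show ?thesis
      unfolding Evs_iff[OF m] worldview_rel_def by blast
  qed
  show "\<exists>p. worldview_rel k m p p'" if "length p' = d" for p'
  proof -
    have "ev B W m p' \<in> Evs d B W k"
      using AxEv[OF k m] Evs_iff[OF m] that by blast
    with that show ?thesis
      unfolding Evs_iff[OF k] worldview_rel_def by blast
  qed
  show "p' = q'" if "worldview_rel k m p p'" "worldview_rel k m p q'" for p p' q'
    using that ev_inj[OF m] by (auto simp: worldview_rel_def)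
  show "lightlike d p q \<longleftrightarrow> lightlike d p' q'"
    if "worldview_rel k m p p'" "worldview_rel k m q q'" for p p' q q'
    using that lightlike_iff_photon[OF k] lightlike_iff_photon[OF m] by (auto simp: worldview_rel_def)
qed (use assms euclidean worldview_rel_simultaneous in \<open>auto simp: worldview_rel_def\<close>)

end

theorem mainTheorem2:
  fixes d :: nat and B Ob IOb Ph :: "'b set"
    and W :: "'b \<Rightarrow> 'b \<Rightarrow> 'q::linordered_field list \<Rightarrow> bool"
    and m k :: 'b and e1 e2 :: "'b set"
  assumes "d \<ge> 3"
    and "SpecRel d B Ob IOb Ph W"
    and "m \<in> IOb" and "k \<in> IOb"
    and "e1 \<in> Evs d B W k" and "e2 \<in> Evs d B W k"
    and "k \<in> e1 \<inter> e2"
    and "has_crd d B W m e1" and "has_crd d B W m e2"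
    and "dist_ob d B W m e1 e2 \<noteq> 0"
  shows "has_crd d B W k e1 \<and> has_crd d B W k e2 \<and>
         time_ob d B W m e1 e2 > time_ob d B W k e1 e2"
proof -
  note m = assms(3) and k = assms(4)
  interpret specrel_model d B Ob IOb Ph W
    using assms(1,2) by unfold_locales simp_all
  obtain p1 p2 where p1: "length p1 = d" "e1 = ev B W k p1" and p2: "length p2 = d" "e2 = ev B W k p2"
    using assms(5,6) unfolding Evs_iff[OF k] by blast
  obtain P Q where P: "length P = d" "e1 = ev B W m P" and Q: "length Q = d" "e2 = ev B W m Q"
    using assms(8,9) ex1_implies_ex unfolding has_crd_def Cd_iff[OF m] by metis
  interpret same_place_events d "worldview_rel k m" p1 p2 P Q
  proof (rule same_place_events.intro[OF worldview_worldview_rel[OF assms(1) k m]], unfold_locales)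
    show "worldview_rel k m p1 P" "worldview_rel k m p2 Q"
      using p1 p2 P Q by (simp_all add: worldview_rel_def)
    show "\<forall>i\<in>{1..<d}. p1!i = p2!i"
      using worldline_space_zero[OF k p1(1)] worldline_space_zero[OF k p2(1)] assms(7) p1 p2 by simp
    have "qsqrt 0 = (0::'q)"
      using qsqrt_eq_iff[OF euclidean order_refl] by simp
    then show "space_dist2 d P Q \<noteq> 0"
      using assms(10) dist_ob_ev[OF m P(1) Q(1)] P Q by auto
  qed
  have "\<bar>p2!0 - p1!0\<bar> < \<bar>Q!0 - P!0\<bar>"
    using time_dilation abs_le_square_iff[of "Q!0 - P!0" "p2!0 - p1!0"] by linarith
  then show ?thesis
    using has_crd_ev[OF k] time_ob_ev[OF k p1(1) p2(1)] time_ob_ev[OF m P(1) Q(1)] p1 p2 P Q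
    by (simp add: abs_minus_commute)
qed

end
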